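(* There is a polynomial $p$ such that for all integers $N\geq1$, all reals $c$, all $\delta\in(0,1]$ and $\varepsilon>0$: if $V\subseteq\{0,1\}^N$ is nonempty and for every $v\in V$ the set $\{u\in V:d_H(v,u)\geq cN\}$ has size at least $\delta|V|$, then there is $X\subseteq V$ with $|X|\leq p(1/\varepsilon,1/\delta)$ such that for every $v\in V$ there is $x\in X$ with $d_H(x,v)\geq(c-\varepsilon)N$.
   Context: $d_H$ denotes the Hamming distance on $\{0,1\}^N$. The polynomial $p$ does not depend on $N$, $V$ or $c$. *)

theory Defs
  imports Main "HOL.Real"
begin

text \<open>Points of the hypercube {0,1}^N are boolean lists of length N.\<close>
definition hamming :: "bool list \<Rightarrow> bool list \<Rightarrow> nat" where
  "hamming u v = card {i. i < length u \<and> i < length v \<and> u ! i \<noteq> v ! i}"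

definition bipoly :: "nat \<Rightarrow> (nat \<Rightarrow> nat \<Rightarrow> real) \<Rightarrow> real \<Rightarrow> real \<Rightarrow> real" where
  "bipoly d coef a b = (\<Sum>i\<le>d. \<Sum>j\<le>d. coef i j * a ^ i * b ^ j)"

end

theory Submission
  imports Defs Complex_Main "HOL-Library.FuncSet"
begin

text \<open>
  Choose m coordinates S uniformly with replacement. By a Chernoff bound, the Hamming
  distance between the restrictions of u and v to S is, up to an error of \<epsilon>m/2, the fraction
  hamming u v / N of m, except for a fraction exp (-m\<epsilon>^2/8) of the samples S.
  Call S a refutation of a tuple x = (x_1, \<dots>, x_k) of points of V if some pattern
  p \<in> {0,1}^m is far (more than (c - \<epsilon>/2)m) from the restrictions of a \<delta>/4 fraction of V,
  but from none of the x_j. For fixed S, a union bound over the 2^m patterns shows that at most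
  2^m (1 - \<delta>/4)^k |V|^k tuples are refuted. Conversely, if x is not a (c - \<epsilon>)-far net,
  witnessed by v, then the restriction of v itself refutes x for at least a \<delta>/4 fraction of
  the samples. Double counting pairs (S, x) then produces a net as soon as
  2^m (1 - \<delta>/4)^k < \<delta>/4 and k exp (-m\<epsilon>^2/8) \<le> \<delta>/4, which both hold for k of order m/\<delta>
  and m polynomial in 1/\<epsilon> and 1/\<delta>.
\<close>

section \<open>A Chernoff bound for sampling with replacement\<close>

lemma exp_neg_le_quadratic:
  fixes s :: real
  assumes "0 \<le> s"
  shows "exp (- s) \<le> 1 - s + s\<^sup>2 / 2"
proof -
  define f where "f x = 1 - x + x\<^sup>2 / 2 - exp (- x)" for x :: real
  have "f 0 \<le> f s"
  proof (rule DERIV_nonneg_imp_nondecreasing[OF assms])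
    fix x :: real
    have "DERIV f x :> - 1 + x + exp (- x)"
      unfolding f_def by (auto intro!: derivative_eq_intros)
    moreover have "- 1 + x + exp (- x) \<ge> 0"
      using exp_ge_add_one_self[of "- x"] by linarith
    ultimately show "\<exists>y. DERIV f x :> y \<and> y \<ge> 0" by blast
  qed
  then show ?thesis unfolding f_def by simp
qed

lemma one_minus_plus_mult_exp_le:
  fixes p t :: real
  assumes "0 \<le> p" "p \<le> 1" "0 \<le> t"
  shows "1 - p + p * exp (- t) \<le> exp (- p * t + t\<^sup>2 / 2)"
proof -
  have "1 - p + p * exp (- t) \<le> 1 - p + p * (1 - t + t\<^sup>2 / 2)"
    using exp_neg_le_quadratic[OF assms(3)] assms(1) by (simp add: mult_left_mono)
  also have "\<dots> = 1 + (- p * t + p * t\<^sup>2 / 2)" by (simp add: algebra_simps)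
  also have "\<dots> \<le> exp (- p * t + p * t\<^sup>2 / 2)" by (rule exp_ge_add_one_self)
  also have "\<dots> \<le> exp (- p * t + t\<^sup>2 / 2)"
    using mult_right_mono[OF assms(2), of "t\<^sup>2"] by simp
  finally show ?thesis .
qed

lemma sum_exp_card_hits:
  fixes t :: real
  assumes "finite I" "D \<subseteq> I"
  shows "(\<Sum>S\<in>PiE {..<m} (\<lambda>_. I). exp (- t * card {j\<in>{..<m}. S j \<in> D}))
           = (card D * exp (- t) + card (I - D)) ^ m"
proof -
  define w where "w i = (if i \<in> D then exp (- t) else 1)" for i
  have "exp (- t * card {j\<in>{..<m}. S j \<in> D}) = (\<Prod>j<m. w (S j))" for S
    by (simp add: w_def prod.If_cases exp_of_nat_mult[symmetric] mult.commute Int_def conj_commute)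
  then have "(\<Sum>S\<in>PiE {..<m} (\<lambda>_. I). exp (- t * card {j\<in>{..<m}. S j \<in> D}))
      = (\<Prod>j<m. \<Sum>i\<in>I. w i)"
    using prod_sum_PiE[of "{..<m}" "\<lambda>_. I" "\<lambda>_. w", symmetric] assms(1) by simp
  also have "(\<Sum>i\<in>I. w i) = card D * exp (- t) + card (I - D)"
    using assms by (simp add: w_def sum.If_cases Int_absorb1 Diff_eq)
  finally show ?thesis by simp
qed

lemma card_few_hits_le:
  fixes t :: real
  assumes I: "finite I" "I \<noteq> {}" and D: "D \<subseteq> I" and t: "0 \<le> t"
  shows "real (card {S \<in> PiE {..<m} (\<lambda>_. I).
            real (card {j\<in>{..<m}. S j \<in> D}) \<le> (card D / card I - t) * m})
         \<le> real (card I) ^ m * exp (- real m * t\<^sup>2 / 2)"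
proof -
  define n where "n = real (card I)"
  define p where "p = card D / n"
  define hits where "hits S = real (card {j\<in>{..<m}. S j \<in> D})" for S :: "nat \<Rightarrow> 'a"
  define T where "T = {S \<in> PiE {..<m} (\<lambda>_. I). hits S \<le> (p - t) * m}"
  have n: "n > 0" using I by (simp add: n_def card_gt_0_iff)
  have "card D \<le> card I" using I D by (simp add: card_mono)
  then have p: "0 \<le> p" "p \<le> 1" using n by (auto simp: p_def n_def)
  have "card D * exp (- t) + card (I - D) = n * (1 - p + p * exp (- t))"
    using I D n by (simp add: p_def n_def card_Diff_subset finite_subset of_nat_diff card_mono field_simps)
  then have moment: "(\<Sum>S\<in>PiE {..<m} (\<lambda>_. I). exp (- t * hits S)) = (n * (1 - p + p * exp (- t))) ^ m"
    using sum_exp_card_hits[OF I(1) D, of t m] by (simp add: hits_def)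
  \<comment> \<open>Markov's inequality for exp (- t * hits S)\<close>
  have "card T * exp (- t * ((p - t) * m)) = (\<Sum>S\<in>T. exp (- t * ((p - t) * m)))" by simp
  also have "\<dots> \<le> (\<Sum>S\<in>T. exp (- t * hits S))"
    by (rule sum_mono) (auto simp: T_def intro: mult_left_mono[OF _ t])
  also have "\<dots> \<le> (\<Sum>S\<in>PiE {..<m} (\<lambda>_. I). exp (- t * hits S))"
    by (rule sum_mono2) (auto simp: T_def finite_PiE I)
  also have "\<dots> \<le> (n * exp (- p * t + t\<^sup>2 / 2)) ^ m"
    unfolding moment using one_minus_plus_mult_exp_le[OF p t] n p
    by (intro power_mono mult_left_mono) (auto intro: add_nonneg_nonneg)
  also have "\<dots> = n ^ m * exp (- real m * t\<^sup>2 / 2) * exp (- t * ((p - t) * m))"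
    by (simp add: power_mult_distrib mult.assoc exp_of_nat_mult[symmetric] flip: exp_add)
       (simp add: algebra_simps power2_eq_square)
  finally show ?thesis by (simp add: T_def hits_def p_def n_def)
qed

section \<open>Hamming distances on sampled coordinates\<close>

text \<open>The samples S \<in> PiE {..<m} (\<lambda>_. {..<N}) are counted rather than weighted: each of the
  N^m samples is equally likely.\<close>
definition subsample :: "nat \<Rightarrow> (nat \<Rightarrow> nat) \<Rightarrow> bool list \<Rightarrow> bool list" where
  "subsample m S u = map (\<lambda>j. u ! S j) [0..<m]"

lemma length_subsample [simp]: "length (subsample m S u) = m"
  by (simp add: subsample_def)

lemma hamming_sym: "hamming u v = hamming v u"
  unfolding hamming_def by (metis (no_types, lifting) Collect_cong)

lemma hamming_le_length: "hamming u v \<le> length u"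
  unfolding hamming_def
  using card_mono[of "{..<length u}" "{i. i < length u \<and> i < length v \<and> u ! i \<noteq> v ! i}"]
  by auto

lemma hamming_eq_card: "length u = length v \<Longrightarrow> hamming u v = card {i\<in>{..<length u}. u ! i \<noteq> v ! i}"
  unfolding hamming_def by simp

lemma hamming_subsample:
  "hamming (subsample m S u) (subsample m S v) = card {j\<in>{..<m}. u ! S j \<noteq> v ! S j}"
  unfolding hamming_def subsample_def by (auto intro!: arg_cong[where f = card])

lemma hamming_map_Not:
  assumes "length u = length v"
  shows "hamming u (map Not v) = length u - hamming u v"
proof -
  define A where "A = {i\<in>{..<length u}. u ! i \<noteq> v ! i}"
  have "{i\<in>{..<length u}. u ! i \<noteq> map Not v ! i} = {..<length u} - A"
    using assms by (auto simp: A_def)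
  moreover have "card ({..<length u} - A) = length u - card A"
    by (subst card_Diff_subset) (auto simp: A_def)
  ultimately show ?thesis
    using assms by (simp add: hamming_eq_card A_def)
qed

lemma subsample_map_Not:
  "(\<And>j. j < m \<Longrightarrow> S j < length v) \<Longrightarrow> subsample m S (map Not v) = map Not (subsample m S v)"
  unfolding subsample_def by simp

lemma card_subsample_close_le:
  fixes c t :: real
  assumes len: "length u = N" "length v = N" and N: "N > 0" and t: "0 \<le> t"
    and far: "c * N \<le> hamming u v"
  shows "real (card {S \<in> PiE {..<m} (\<lambda>_. {..<N}).
            real (hamming (subsample m S u) (subsample m S v)) \<le> (c - t) * m})
         \<le> real N ^ m * exp (- real m * t\<^sup>2 / 2)"
proof -
  define D where "D = {i\<in>{..<N}. u ! i \<noteq> v ! i}"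
  have c: "c \<le> card D / N"
    using far N len by (simp add: D_def hamming_eq_card field_simps)
  have "{S \<in> PiE {..<m} (\<lambda>_. {..<N}). real (hamming (subsample m S u) (subsample m S v)) \<le> (c - t) * m}
     \<subseteq> {S \<in> PiE {..<m} (\<lambda>_. {..<N}). real (card {j\<in>{..<m}. S j \<in> D}) \<le> (card D / N - t) * m}"
  proof safe
    fix S assume S: "S \<in> PiE {..<m} (\<lambda>_. {..<N})"
      and close: "real (hamming (subsample m S u) (subsample m S v)) \<le> (c - t) * m"
    have "{j\<in>{..<m}. S j \<in> D} = {j\<in>{..<m}. u ! S j \<noteq> v ! S j}"
      using S by (auto simp: D_def)
    moreover have "(c - t) * m \<le> (card D / N - t) * m"
      using c by (simp add: mult_right_mono)
    ultimately show "real (card {j\<in>{..<m}. S j \<in> D}) \<le> (card D / N - t) * m"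
      using close by (simp add: hamming_subsample)
  qed
  then have "real (card {S \<in> PiE {..<m} (\<lambda>_. {..<N}).
                real (hamming (subsample m S u) (subsample m S v)) \<le> (c - t) * m})
     \<le> real (card {S \<in> PiE {..<m} (\<lambda>_. {..<N}).
                real (card {j\<in>{..<m}. S j \<in> D}) \<le> (card D / card {..<N} - t) * m})"
    by (intro of_nat_mono card_mono) (simp_all add: finite_PiE)
  also have "\<dots> \<le> real (card {..<N}) ^ m * exp (- real m * t\<^sup>2 / 2)"
    by (rule card_few_hits_le) (use N t in \<open>auto simp: D_def\<close>)
  finally show ?thesis by simp
qed

lemma card_subsample_far_le:
  fixes c t :: real
  assumes len: "length u = N" "length v = N" and N: "N > 0" and t: "0 \<le> t"
    and close: "hamming u v \<le> c * N"
  shows "real (card {S \<in> PiE {..<m} (\<lambda>_. {..<N}).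
            (c + t) * m \<le> real (hamming (subsample m S u) (subsample m S v))})
         \<le> real N ^ m * exp (- real m * t\<^sup>2 / 2)"
proof -
  \<comment> \<open>Complementing v turns the upper tail into the lower tail.\<close>
  have "(1 - c) * N \<le> hamming u (map Not v)"
    using close len hamming_le_length[of u v]
    by (simp add: hamming_map_Not of_nat_diff algebra_simps)
  note complement = card_subsample_close_le[OF len(1) _ N t this, of m]
  have "{S \<in> PiE {..<m} (\<lambda>_. {..<N}). (c + t) * m \<le> real (hamming (subsample m S u) (subsample m S v))}
     \<subseteq> {S \<in> PiE {..<m} (\<lambda>_. {..<N}).
          real (hamming (subsample m S u) (subsample m S (map Not v))) \<le> (1 - c - t) * m}"
  proof safe
    fix S assume S: "S \<in> PiE {..<m} (\<lambda>_. {..<N})"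
      and far: "(c + t) * m \<le> real (hamming (subsample m S u) (subsample m S v))"
    have "S j < length v" if "j < m" for j
      using S len that by auto
    then have "subsample m S (map Not v) = map Not (subsample m S v)"
      by (rule subsample_map_Not)
    then have "hamming (subsample m S u) (subsample m S (map Not v))
        = m - hamming (subsample m S u) (subsample m S v)"
      by (simp add: hamming_map_Not)
    moreover have "hamming (subsample m S u) (subsample m S v) \<le> m"
      using hamming_le_length[of "subsample m S u"] by simp
    ultimately show "real (hamming (subsample m S u) (subsample m S (map Not v))) \<le> (1 - c - t) * m"
      using far by (simp add: of_nat_diff algebra_simps)
  qed
  then have "card {S \<in> PiE {..<m} (\<lambda>_. {..<N}). (c + t) * m \<le> real (hamming (subsample m S u) (subsample m S v))}
     \<le> card {S \<in> PiE {..<m} (\<lambda>_. {..<N}).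
          real (hamming (subsample m S u) (subsample m S (map Not v))) \<le> (1 - c - t) * m}"
    by (rule card_mono[rotated]) (simp add: finite_PiE)
  with complement len show ?thesis by (simp add: diff_diff_eq)
qed

section \<open>Counting refuted nets\<close>

lemma bool_lists_length_eq:
  shows finite_bool_lists_length_eq: "finite {xs :: bool list. length xs = n}"
    and card_bool_lists_length_eq: "card {xs :: bool list. length xs = n} = 2 ^ n"
  using finite_lists_length_eq[of "UNIV :: bool set" n] card_lists_length_eq[of "UNIV :: bool set" n]
  by simp_all

lemma sum_card_filter_swap:
  assumes "finite A" "finite B"
  shows "(\<Sum>a\<in>A. card {b\<in>B. R a b}) = (\<Sum>b\<in>B. card {a\<in>A. R a b})"
proof -
  have "(\<Sum>a\<in>A. card {b\<in>B. R a b}) = (\<Sum>a\<in>A. \<Sum>b\<in>B. if R a b then 1 else 0)"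
    using assms by (simp add: sum.If_cases Int_def conj_commute)
  also have "\<dots> = (\<Sum>b\<in>B. \<Sum>a\<in>A. if R a b then 1 else 0)"
    by (rule sum.swap)
  also have "\<dots> = (\<Sum>b\<in>B. card {a\<in>A. R a b})"
    using assms by (simp add: sum.If_cases Int_def conj_commute)
  finally show ?thesis .
qed

lemma sum_le_card_ge_bound:
  fixes f :: "'a \<Rightarrow> real"
  assumes "finite A" "\<And>x. x \<in> A \<Longrightarrow> f x \<le> M" "0 \<le> b"
  shows "(\<Sum>x\<in>A. f x) \<le> M * card {x\<in>A. b \<le> f x} + b * card A"
proof -
  have "f x \<le> M * (if b \<le> f x then 1 else 0) + b" if "x \<in> A" for x
    using assms(2)[OF that] assms(3) by auto
  then have "(\<Sum>x\<in>A. f x) \<le> (\<Sum>x\<in>A. M * (if b \<le> f x then 1 else 0) + b)"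
    by (rule sum_mono)
  also have "\<dots> = M * card {x\<in>A. b \<le> f x} + b * card A"
    using assms(1) by (simp add: sum.distrib sum_distrib_left[symmetric] sum.If_cases Int_def conj_commute)
  finally show ?thesis .
qed

lemma card_tuples_missing_large_set_le:
  fixes \<alpha> :: real and G :: "'p \<Rightarrow> 'a set"
  assumes V: "finite V" and P: "finite P" and G: "\<And>p. p \<in> P \<Longrightarrow> G p \<subseteq> V" and \<alpha>: "\<alpha> \<le> 1"
  shows "real (card {x \<in> PiE {..<k} (\<lambda>_. V).
            \<exists>p\<in>P. \<alpha> * card V \<le> card (G p) \<and> (\<forall>j<k. x j \<notin> G p)})
         \<le> card P * (card V * (1 - \<alpha>)) ^ k"
proof -
  define P' where "P' = {p\<in>P. \<alpha> * card V \<le> card (G p)}"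
  have GP': "G p \<subseteq> V" "card (G p) \<le> card V" "\<alpha> * card V \<le> card (G p)" if "p \<in> P'" for p
    using that G V by (auto simp: P'_def card_mono)
  have "{x \<in> PiE {..<k} (\<lambda>_. V). \<exists>p\<in>P. \<alpha> * card V \<le> card (G p) \<and> (\<forall>j<k. x j \<notin> G p)}
      \<subseteq> (\<Union>p\<in>P'. PiE {..<k} (\<lambda>_. V - G p))"
    by (auto simp: P'_def PiE_def Pi_def)
  then have "card {x \<in> PiE {..<k} (\<lambda>_. V). \<exists>p\<in>P. \<alpha> * card V \<le> card (G p) \<and> (\<forall>j<k. x j \<notin> G p)}
      \<le> (\<Sum>p\<in>P'. card (PiE {..<k} (\<lambda>_. V - G p)))"
    using P V by (intro order.trans[OF card_mono card_UN_le]) (auto simp: P'_def finite_PiE)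
  also have "\<dots> = (\<Sum>p\<in>P'. (card V - card (G p)) ^ k)"
    by (intro sum.cong refl) (simp add: card_PiE card_Diff_subset[OF finite_subset[OF GP'(1) V] GP'(1)])
  finally have "real (card {x \<in> PiE {..<k} (\<lambda>_. V). \<exists>p\<in>P. \<alpha> * card V \<le> card (G p) \<and> (\<forall>j<k. x j \<notin> G p)})
      \<le> real (\<Sum>p\<in>P'. (card V - card (G p)) ^ k)"
    by (rule of_nat_mono)
  also have "\<dots> = (\<Sum>p\<in>P'. (real (card V) - card (G p)) ^ k)"
    unfolding of_nat_sum using GP'(2) by (intro sum.cong refl) (simp add: of_nat_diff)
  also have "\<dots> \<le> (\<Sum>p\<in>P'. (card V * (1 - \<alpha>)) ^ k)"
    using GP'(2,3) by (intro sum_mono power_mono) (auto simp: algebra_simps)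
  also have "\<dots> \<le> card P * (card V * (1 - \<alpha>)) ^ k"
    using P \<alpha> by (simp add: P'_def card_mono mult_right_mono)
  finally show ?thesis .
qed
definition far_on_sample :: "bool list set \<Rightarrow> nat \<Rightarrow> (nat \<Rightarrow> nat) \<Rightarrow> real \<Rightarrow> bool list \<Rightarrow> bool list set" where
  "far_on_sample V m S \<tau> p = {u \<in> V. \<tau> < real (hamming (subsample m S u) p)}"

lemma card_samples_far_ge:
  fixes c t :: real
  assumes len: "length u = N" "length v = N" and N: "N > 0" and t: "0 \<le> t"
    and far: "c * N \<le> hamming u v"
  shows "real N ^ m * (1 - exp (- real m * t\<^sup>2 / 2))
         \<le> card {S \<in> PiE {..<m} (\<lambda>_. {..<N}).
              (c - t) * m < real (hamming (subsample m S u) (subsample m S v))}"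
proof -
  define SS where "SS = PiE {..<m} (\<lambda>_. {..<N})"
  define close where "close = {S \<in> SS. real (hamming (subsample m S u) (subsample m S v)) \<le> (c - t) * m}"
  have "{S \<in> SS. (c - t) * m < real (hamming (subsample m S u) (subsample m S v))} = SS - close"
    by (auto simp: close_def)
  moreover have "card (SS - close) = card SS - card close" "card close \<le> card SS"
    by (auto simp: close_def SS_def finite_PiE intro!: card_Diff_subset card_mono)
  moreover have "card SS = N ^ m"
    by (simp add: SS_def card_PiE)
  ultimately show ?thesis
    using card_subsample_close_le[OF len N t far, of m]
    by (simp add: SS_def close_def of_nat_diff algebra_simps)
qed

lemma card_heavy_samples_ge:
  fixes c t \<delta> :: real
  assumes V: "finite V" "V \<subseteq> {xs. length xs = N}" and N: "N > 0" and v: "v \<in> V"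
    and far: "\<delta> * card V \<le> card {u\<in>V. c * N \<le> hamming v u}"
    and \<delta>: "0 \<le> \<delta>" and t: "0 \<le> t" and small: "exp (- real m * t\<^sup>2 / 2) \<le> 1 / 4"
  shows "\<delta> / 2 * real N ^ m
         \<le> card {S \<in> PiE {..<m} (\<lambda>_. {..<N}).
              \<delta> / 4 * card V \<le> card (far_on_sample V m S ((c - t) * m) (subsample m S v))}"
proof -
  define SS where "SS = PiE {..<m} (\<lambda>_. {..<N})"
  define n where "n = real (card V)"
  define \<tau> where "\<tau> = (c - t) * m"
  define f where "f S = real (card (far_on_sample V m S \<tau> (subsample m S v)))" for S
  define F where "F = {u\<in>V. c * N \<le> hamming v u}"
  have n: "n > 0" using V v by (auto simp: n_def card_gt_0_iff)
  have "\<delta> * n * (real N ^ m * (1 - 1 / 4)) \<le> card F * (real N ^ m * (1 - exp (- real m * t\<^sup>2 / 2)))"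
    using far small by (intro mult_mono) (auto simp: F_def n_def)
  also have "\<dots> = (\<Sum>u\<in>F. real N ^ m * (1 - exp (- real m * t\<^sup>2 / 2)))"
    by simp
  also have "\<dots> \<le> (\<Sum>u\<in>F. real (card {S \<in> SS. \<tau> < hamming (subsample m S u) (subsample m S v)}))"
    unfolding SS_def \<tau>_def using V v N t
    by (intro sum_mono card_samples_far_ge) (auto simp: F_def hamming_sym)
  also have "\<dots> \<le> (\<Sum>u\<in>V. real (card {S \<in> SS. \<tau> < hamming (subsample m S u) (subsample m S v)}))"
    using V by (intro sum_mono2) (auto simp: F_def)
  also have "\<dots> = (\<Sum>S\<in>SS. f S)"
    using sum_card_filter_swap[of SS V "\<lambda>S u. \<tau> < hamming (subsample m S u) (subsample m S v)"] V
    by (simp add: f_def far_on_sample_def SS_def finite_PiE flip: of_nat_sum)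
  also have "\<dots> \<le> n * card {S\<in>SS. \<delta> / 4 * n \<le> f S} + \<delta> / 4 * n * card SS"
    using V \<delta> n by (intro sum_le_card_ge_bound)
      (auto simp: SS_def finite_PiE f_def n_def far_on_sample_def intro!: card_mono)
  finally have "\<delta> / 2 * real N ^ m * n \<le> card {S\<in>SS. \<delta> / 4 * n \<le> f S} * n"
    by (simp add: SS_def card_PiE algebra_simps)
  then show ?thesis
    using n by (simp add: SS_def f_def n_def \<tau>_def)
qed

definition sample_refutes ::
  "bool list set \<Rightarrow> nat \<Rightarrow> (nat \<Rightarrow> nat) \<Rightarrow> real \<Rightarrow> real \<Rightarrow> nat \<Rightarrow> (nat \<Rightarrow> bool list) \<Rightarrow> bool" where
  "sample_refutes V m S \<tau> \<alpha> k x \<longleftrightarrow> (\<exists>p\<in>{p. length p = m}.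
     \<alpha> * card V \<le> card (far_on_sample V m S \<tau> p) \<and> (\<forall>j<k. x j \<notin> far_on_sample V m S \<tau> p))"

lemma card_refuting_samples_ge:
  fixes c t \<delta> :: real
  assumes V: "finite V" "V \<subseteq> {xs. length xs = N}" and N: "N > 0" and v: "v \<in> V"
    and far: "\<delta> * card V \<le> card {u\<in>V. c * N \<le> hamming v u}"
    and \<delta>: "0 \<le> \<delta>" and t: "0 \<le> t"
    and x: "\<And>j. j < k \<Longrightarrow> x j \<in> V" and close: "\<And>j. j < k \<Longrightarrow> hamming (x j) v \<le> (c - 2 * t) * N"
    and small: "exp (- real m * t\<^sup>2 / 2) \<le> 1 / 4" and few: "k * exp (- real m * t\<^sup>2 / 2) \<le> \<delta> / 4"
  shows "\<delta> / 4 * real N ^ m \<le> card {S \<in> PiE {..<m} (\<lambda>_. {..<N}). sample_refutes V m S ((c - t) * m) (\<delta> / 4) k x}"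
proof -
  define SS where "SS = PiE {..<m} (\<lambda>_. {..<N})"
  define \<tau> where "\<tau> = (c - t) * m"
  define heavy where "heavy = {S \<in> SS. \<delta> / 4 * card V \<le> card (far_on_sample V m S \<tau> (subsample m S v))}"
  define hit where "hit = {S \<in> SS. \<exists>j<k. \<tau> \<le> hamming (subsample m S (x j)) (subsample m S v)}"
  have fin: "finite SS" by (simp add: SS_def finite_PiE)
  have "heavy - hit \<subseteq> {S \<in> SS. sample_refutes V m S \<tau> (\<delta> / 4) k x}"
  proof
    fix S assume "S \<in> heavy - hit"
    then show "S \<in> {S \<in> SS. sample_refutes V m S \<tau> (\<delta> / 4) k x}"
      unfolding sample_refutes_def
      by (intro CollectI conjI bexI[of _ "subsample m S v"])
        (auto simp: heavy_def hit_def far_on_sample_def)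
  qed
  then have "real (card heavy) - card hit \<le> card {S \<in> SS. sample_refutes V m S \<tau> (\<delta> / 4) k x}"
    using fin card_mono[of "{S \<in> SS. sample_refutes V m S \<tau> (\<delta> / 4) k x}" "heavy - hit"]
      diff_card_le_card_Diff[of hit heavy]
    by (auto simp: hit_def heavy_def)
  moreover have "\<delta> / 2 * real N ^ m \<le> card heavy"
    using card_heavy_samples_ge[OF V N v far \<delta> t small] by (simp add: heavy_def SS_def \<tau>_def)
  moreover have "real (card hit) \<le> k * (N ^ m * exp (- real m * t\<^sup>2 / 2))"
  proof -
    have "hit = (\<Union>j<k. {S \<in> SS. \<tau> \<le> hamming (subsample m S (x j)) (subsample m S v)})"
      by (auto simp: hit_def)
    then have "real (card hit) \<le> (\<Sum>j<k. real (card {S \<in> SS. \<tau> \<le> hamming (subsample m S (x j)) (subsample m S v)}))"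
      using card_UN_le[of "{..<k}"] by (simp flip: of_nat_sum)
    also have "\<dots> \<le> (\<Sum>j<k. N ^ m * exp (- real m * t\<^sup>2 / 2))"
    proof (intro sum_mono)
      fix j assume "j \<in> {..<k}"
      then have "x j \<in> V" "hamming (x j) v \<le> (c - 2 * t) * N"
        using x close by auto
      then show "real (card {S \<in> SS. \<tau> \<le> hamming (subsample m S (x j)) (subsample m S v)})
          \<le> N ^ m * exp (- real m * t\<^sup>2 / 2)"
        using card_subsample_far_le[of "x j" N v t "c - 2 * t" m] V v N t
        by (auto simp: SS_def \<tau>_def algebra_simps)
    qed
    finally show ?thesis by simp
  qed
  moreover have "k * (N ^ m * exp (- real m * t\<^sup>2 / 2)) \<le> \<delta> / 4 * real N ^ m"
    using mult_right_mono[OF few, of "N ^ m"] by (simp add: algebra_simps)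
  ultimately show ?thesis
    by (simp add: SS_def \<tau>_def)
qed

lemma exists_far_tuple:
  fixes c \<delta> \<epsilon> :: real
  assumes V: "V \<subseteq> {xs. length xs = N}" "V \<noteq> {}" and N: "N > 0"
    and \<delta>: "0 < \<delta>" "\<delta> \<le> 1" and \<epsilon>: "0 < \<epsilon>"
    and far: "\<forall>v\<in>V. \<delta> * card V \<le> card {u\<in>V. c * N \<le> hamming v u}"
    and small: "exp (- real m * (\<epsilon> / 2)\<^sup>2 / 2) \<le> 1 / 4"
    and few: "k * exp (- real m * (\<epsilon> / 2)\<^sup>2 / 2) \<le> \<delta> / 4"
    and dense: "2 ^ m * (1 - \<delta> / 4) ^ k < \<delta> / 4"
  shows "\<exists>x\<in>PiE {..<k} (\<lambda>_. V). \<forall>v\<in>V. \<exists>j<k. (c - \<epsilon>) * N \<le> hamming (x j) v"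
proof (rule ccontr)
  assume no_net: "\<not> ?thesis"
  define SS where "SS = PiE {..<m} (\<lambda>_. {..<N})"
  define XX where "XX = PiE {..<k} (\<lambda>_. V)"
  define n where "n = card V"
  define R where "R S x \<longleftrightarrow> sample_refutes V m S ((c - \<epsilon> / 2) * m) (\<delta> / 4) k x" for S x
  have finV: "finite V"
    using finite_subset[OF V(1) finite_bool_lists_length_eq] .
  have n: "n > 0" using finV V(2) by (simp add: n_def card_gt_0_iff)
  have many: "\<delta> / 4 * real N ^ m \<le> card {S \<in> SS. R S x}" if x: "x \<in> XX" for x
  proof -
    obtain v where v: "v \<in> V" and close: "\<forall>j<k. hamming (x j) v < (c - \<epsilon>) * N"
      using no_net x by (force simp: XX_def not_le)
    have xV: "x j \<in> V" if "j < k" for j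
      using x that by (auto simp: XX_def)
    have "hamming (x j) v \<le> (c - 2 * (\<epsilon> / 2)) * N" if "j < k" for j
      using close that by (simp add: less_imp_le)
    from card_refuting_samples_ge[OF finV V(1) N v _ _ _ xV this small few] far v \<delta> \<epsilon>
    show ?thesis
      by (simp add: SS_def R_def)
  qed
  have rare: "card {x \<in> XX. R S x} \<le> 2 ^ m * (n * (1 - \<delta> / 4)) ^ k" for S
  proof -
    have "card {x \<in> XX. R S x} \<le> card {p :: bool list. length p = m} * (n * (1 - \<delta> / 4)) ^ k"
      unfolding XX_def R_def sample_refutes_def n_def
      by (rule card_tuples_missing_large_set_le)
        (use finV finite_bool_lists_length_eq \<delta> in \<open>auto simp: far_on_sample_def\<close>)
    then show ?thesis by (simp add: card_bool_lists_length_eq)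
  qed
  have "card XX * (\<delta> / 4 * real N ^ m) = (\<Sum>x\<in>XX. \<delta> / 4 * real N ^ m)"
    by simp
  also have "\<dots> \<le> (\<Sum>x\<in>XX. real (card {S \<in> SS. R S x}))"
    using many by (rule sum_mono)
  also have "\<dots> = (\<Sum>S\<in>SS. real (card {x \<in> XX. R S x}))"
    using sum_card_filter_swap[of XX SS "\<lambda>x S. R S x"] finV
    by (simp add: XX_def SS_def finite_PiE flip: of_nat_sum)
  also have "\<dots> \<le> (\<Sum>S\<in>SS. 2 ^ m * (n * (1 - \<delta> / 4)) ^ k)"
    using rare by (rule sum_mono)
  also have "\<dots> = card SS * (2 ^ m * (n * (1 - \<delta> / 4)) ^ k)"
    by simp
  finally have "n ^ k * real N ^ m * (\<delta> / 4) \<le> n ^ k * real N ^ m * (2 ^ m * (1 - \<delta> / 4) ^ k)"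
    by (simp add: XX_def SS_def card_PiE n_def power_mult_distrib mult_ac)
  then show False
    using dense n N by (simp add: mult_le_cancel_left_pos)
qed

section \<open>Choice of the sample sizes\<close>

lemma exp_ge_square_quarter:
  fixes y :: real
  assumes "0 \<le> y"
  shows "y\<^sup>2 / 4 \<le> exp y"
proof -
  have "y / 2 \<le> exp (y / 2)"
    using exp_ge_add_one_self[of "y / 2"] by linarith
  then have "(y / 2)\<^sup>2 \<le> exp (y / 2) ^ 2"
    using assms by (intro power_mono) auto
  also have "exp (y / 2) ^ 2 = exp y"
    by (simp flip: exp_of_nat_mult)
  finally show ?thesis by (simp add: power_divide)
qed

lemma two_pow_mult_one_minus_pow_less:
  fixes q :: real
  assumes q: "0 < q" "q \<le> 1" and k: "(m + 1 / q) / q \<le> k"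
  shows "2 ^ m * (1 - q) ^ k < q"
proof -
  have "(1 - q) ^ k \<le> exp (- q) ^ k"
    using exp_ge_add_one_self[of "- q"] q by (intro power_mono) auto
  also have "\<dots> = exp (- (q * k))"
    by (simp add: exp_of_nat_mult[symmetric] mult.commute)
  also have "\<dots> \<le> exp (- (m + 1 / q))"
    using mult_left_mono[OF k, of q] q by simp
  finally have "(1 - q) ^ k \<le> exp (- (m + 1 / q))" .
  moreover have "(2::real) ^ m \<le> exp 1 ^ m"
    using exp_ge_add_one_self[of 1] by (intro power_mono) auto
  ultimately have "2 ^ m * (1 - q) ^ k \<le> exp m * exp (- (m + 1 / q))"
    using q by (intro mult_mono) (auto simp flip: exp_of_nat_mult)
  also have "\<dots> = exp (- (1 / q))"
    by (simp flip: exp_add)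
  also have "\<dots> < q"
    using exp_gt_self[of "1 / q"] q by (simp add: exp_minus field_simps)
  finally show ?thesis .
qed

definition net_size_coef :: "nat \<Rightarrow> nat \<Rightarrow> real" where
  "net_size_coef i j =
     (if (i, j) = (4, 3) then 16384 else if (i, j) = (2, 4) then 4352 else
      if (i, j) = (0, 2) then 16 else if (i, j) = (0, 1) then 4 else if (i, j) = (0, 0) then 1 else 0)"

lemma bipoly_net_size_coef:
  "bipoly 4 net_size_coef a b = 16384 * a ^ 4 * b ^ 3 + 4352 * a\<^sup>2 * b ^ 4 + 16 * b\<^sup>2 + 4 * b + 1"
  by (simp add: bipoly_def net_size_coef_def numeral_eq_Suc atMost_Suc)

lemma exists_sample_sizes:
  fixes \<delta> \<epsilon> :: real
  assumes \<delta>: "0 < \<delta>" "\<delta> \<le> 1" and \<epsilon>: "0 < \<epsilon>"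
  obtains m k :: nat
  where "exp (- real m * (\<epsilon> / 2)\<^sup>2 / 2) \<le> 1 / 4"
    and "k * exp (- real m * (\<epsilon> / 2)\<^sup>2 / 2) \<le> \<delta> / 4"
    and "2 ^ m * (1 - \<delta> / 4) ^ k < \<delta> / 4"
    and "k \<le> bipoly 4 net_size_coef (1 / \<epsilon>) (1 / \<delta>)"
proof -
  define a where "a = 1 / \<epsilon>"
  define b where "b = 1 / \<delta>"
  \<comment> \<open>Y is chosen so that y \<ge> Y forces 4bk \<le> y^2/4 \<le> exp y.\<close>
  define Y where "Y = 512 * a\<^sup>2 * b\<^sup>2 + 136 * b ^ 3"
  define m where "m = nat \<lceil>8 * a\<^sup>2 * Y\<rceil>"
  define y where "y = real m * (\<epsilon> / 2)\<^sup>2 / 2"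
  define k where "k = nat \<lceil>4 * b * (m + 4 * b)\<rceil>"
  have a: "a > 0" and b: "b \<ge> 1"
    using \<delta> \<epsilon> by (auto simp: a_def b_def)
  have "b * 1 \<le> b * b\<^sup>2"
    using b one_le_power[OF b, of 2] by (intro mult_left_mono) auto
  then have b3: "b ^ 3 \<ge> b" "b ^ 3 \<ge> 1"
    using one_le_power[OF b, of 3] by (simp_all add: power3_eq_cube power2_eq_square)
  have Y: "Y \<ge> 136"
    using b3 by (simp add: Y_def add_increasing)
  have m: "8 * a\<^sup>2 * Y \<le> m" "m \<le> 8 * a\<^sup>2 * Y + 1"
    using Y by (simp_all add: m_def)
  have my: "m = 8 * a\<^sup>2 * y"
    using \<epsilon> by (simp add: y_def a_def power_divide)
  have y: "Y \<le> y"
    using m(1) a by (simp add: my)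
  have k: "4 * b * (m + 4 * b) \<le> k" "k \<le> 4 * b * (m + 4 * b) + 1"
    using b by (simp_all add: k_def)
  show thesis
  proof
    have "4 \<le> exp y"
      using exp_ge_add_one_self[of y] Y y by linarith
    then show "exp (- real m * (\<epsilon> / 2)\<^sup>2 / 2) \<le> 1 / 4"
      by (simp add: y_def exp_minus field_simps)
  next
    have "4 * b * k \<le> 4 * b * (4 * b * (8 * a\<^sup>2 * y + 4 * b) + 1)"
      using k(2) b by (simp add: my)
    also have "\<dots> = y * (128 * a\<^sup>2 * b\<^sup>2) + (64 * b ^ 3 + 4 * b)"
      by (simp add: algebra_simps power2_eq_square power3_eq_cube)
    also have "\<dots> \<le> y * (128 * a\<^sup>2 * b\<^sup>2) + y * (34 * b ^ 3)"
    proof -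
      have "2 * (34 * b ^ 3) \<le> y * (34 * b ^ 3)"
        using y Y b3 b by (intro mult_right_mono) auto
      then show ?thesis using b3 by linarith
    qed
    also have "\<dots> \<le> y * (y / 4)"
      using y Y by (simp add: Y_def flip: distrib_left)
    also have "\<dots> \<le> exp y"
      using exp_ge_square_quarter[of y] y Y by (simp add: power2_eq_square)
    finally have "k \<le> exp y * \<delta> / 4"
      using \<delta> by (simp add: b_def field_simps)
    then show "k * exp (- real m * (\<epsilon> / 2)\<^sup>2 / 2) \<le> \<delta> / 4"
      by (simp add: y_def exp_minus field_simps)
  next
    show "2 ^ m * (1 - \<delta> / 4) ^ k < \<delta> / 4"
      using \<delta> k(1) by (intro two_pow_mult_one_minus_pow_less) (auto simp: b_def field_simps)
  next
    have "k \<le> 4 * b * ((8 * a\<^sup>2 * Y + 1) + 4 * b) + 1"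
      using k(2) m(2) b by (smt (verit) mult_left_mono)
    also have "\<dots> = bipoly 4 net_size_coef a b"
      by (simp add: bipoly_net_size_coef Y_def algebra_simps power2_eq_square power3_eq_cube power4_eq_xxxx)
    finally show "k \<le> bipoly 4 net_size_coef (1 / \<epsilon>) (1 / \<delta>)"
      by (simp add: a_def b_def)
  qed
qed

theorem lemma1p4:
  shows "\<exists>(d::nat) (coef::nat \<Rightarrow> nat \<Rightarrow> real).
    \<forall>(N::nat) (c::real) (\<delta>::real) (\<epsilon>::real) (V::bool list set).
      N \<ge> 1 \<longrightarrow> 0 < \<delta> \<longrightarrow> \<delta> \<le> 1 \<longrightarrow> \<epsilon> > 0 \<longrightarrow>
      V \<noteq> {} \<longrightarrow> V \<subseteq> {xs. length xs = N} \<longrightarrow>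
      (\<forall>v\<in>V. real (card {u\<in>V. real (hamming v u) \<ge> c * real N}) \<ge> \<delta> * real (card V)) \<longrightarrow>
      (\<exists>X\<subseteq>V. real (card X) \<le> bipoly d coef (1/\<epsilon>) (1/\<delta>) \<and>
         (\<forall>v\<in>V. \<exists>x\<in>X. real (hamming x v) \<ge> (c - \<epsilon>) * real N))"
proof (intro exI[of _ 4] exI[of _ net_size_coef] allI impI)
  fix N :: nat and c \<delta> \<epsilon> :: real and V :: "bool list set"
  assume N: "N \<ge> 1" and \<delta>: "0 < \<delta>" "\<delta> \<le> 1" and \<epsilon>: "\<epsilon> > 0"
    and V: "V \<noteq> {}" "V \<subseteq> {xs. length xs = N}"
    and far: "\<forall>v\<in>V. real (card {u\<in>V. real (hamming v u) \<ge> c * real N}) \<ge> \<delta> * real (card V)"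
  obtain m k where sizes: "exp (- real m * (\<epsilon> / 2)\<^sup>2 / 2) \<le> 1 / 4"
      "k * exp (- real m * (\<epsilon> / 2)\<^sup>2 / 2) \<le> \<delta> / 4" "2 ^ m * (1 - \<delta> / 4) ^ k < \<delta> / 4"
    and k: "k \<le> bipoly 4 net_size_coef (1 / \<epsilon>) (1 / \<delta>)"
    using exists_sample_sizes[OF \<delta> \<epsilon>] .
  obtain x where x: "x \<in> PiE {..<k} (\<lambda>_. V)"
    and net: "\<forall>v\<in>V. \<exists>j<k. (c - \<epsilon>) * N \<le> hamming (x j) v"
    using exists_far_tuple[OF V(2,1) _ \<delta> \<epsilon> far sizes] N by auto
  show "\<exists>X\<subseteq>V. real (card X) \<le> bipoly 4 net_size_coef (1/\<epsilon>) (1/\<delta>) \<and>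
      (\<forall>v\<in>V. \<exists>x\<in>X. real (hamming x v) \<ge> (c - \<epsilon>) * real N)"
  proof (intro exI conjI)
    show "x ` {..<k} \<subseteq> V"
      using x by auto
    show "real (card (x ` {..<k})) \<le> bipoly 4 net_size_coef (1 / \<epsilon>) (1 / \<delta>)"
      using card_image_le[of "{..<k}" x] k by simp
    show "\<forall>v\<in>V. \<exists>y\<in>x ` {..<k}. (c - \<epsilon>) * N \<le> hamming y v"
      using net by blast
  qed
qed

end
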